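(* Let $A$, $I$ and $d$ be fixed positive integers with $d<\min\{I,A-1\}$. Let $\mathbb{P}(C)$ be the probability that a profile chosen uniformly at random from $\mathcal{P}_{A,I}$ contains a circulant pathology of size $k\geq d+2$. Then $$\mathbb{P}(C) \geq 1 - \left(1 - \sum_{k=d+2}^{I} B_k \right)^{\left\lfloor \frac{A}{d+2} \right\rfloor},$$ where $$B_k=\binom{I}{k} \genfrac\{\}{0pt}{0}{k}{d+2} (d+2)! \left(\frac{1}{(d+2)!}\right)^k \left(1 - \frac{d+2}{(d+2)!}\right)^{I-k}$$ and $\genfrac\{\}{0pt}{1}{k}{d+2}$ denotes a Stirling number of the second kind.
   Context: There are $A$ alternatives and $I$ individuals. A preference is a strict total order (ranking without ties) on the $A$ alternatives; $a>_i b$ means individual $i$ prefers $a$ to $b$. A profile assigns a preference to each of the $I$ individuals; $\mathcal{P}_{A,I}$ is the set of all profiles, so a uniformly random profile assigns to each individual an independent uniformly random preference among the $A!$ possible ones. A circulant pathology of size $k$ in a profile consists of $k$ distinct alternatives $a_1,\dots,a_k$ and $k$ distinct individuals $1,\dots,k$ such that for each $j\in\{1,\dots,k\}$, individual $j$'s preference restricted to $\{a_1,\dots,a_k\}$ is $a_j >_j a_{j+1} >_j \dots >_j a_k >_j a_1 >_j \dots >_j a_{j-1}$ (the cyclic shift of $a_1>\dots>a_k$ starting at $a_j$). *)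

theory Defs
  imports Complex_Main "HOL-Combinatorics.Stirling" "HOL-Library.FuncSet"
begin

text \<open>A preference (strict total order
on the alternatives) is represented as a list enumerating all alternatives exactly once,
from most preferred to least preferred.\<close>

definition preferences :: "nat \<Rightarrow> nat list set" where
  "preferences A = {xs. distinct xs \<and> set xs = {0..<A}}"

definition prefers :: "nat list \<Rightarrow> nat \<Rightarrow> nat \<Rightarrow> bool" where
  "prefers xs a b = (\<exists>p q. p < q \<and> q < length xs \<and> xs ! p = a \<and> xs ! q = b)"

definition profiles :: "nat \<Rightarrow> nat \<Rightarrow> (nat \<Rightarrow> nat list) set" where
  "profiles A I = Pi\<^sub>E {0..<I} (\<lambda>_. preferences A)"

definition has_circulant_pathology :: "nat \<Rightarrow> nat \<Rightarrow> (nat \<Rightarrow> nat list) \<Rightarrow> nat \<Rightarrow> bool" where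
  "has_circulant_pathology A I P k =
     (\<exists>a v. inj_on a {0..<k} \<and> a ` {0..<k} \<subseteq> {0..<A} \<and>
            inj_on v {0..<k} \<and> v ` {0..<k} \<subseteq> {0..<I} \<and>
            (\<forall>j<k. \<forall>t<k. \<forall>t'<k. t < t' \<longrightarrow>
                prefers (P (v j)) (a ((j + t) mod k)) (a ((j + t') mod k))))"

definition B_term :: "nat \<Rightarrow> nat \<Rightarrow> nat \<Rightarrow> real" where
  "B_term I d k = real (I choose k) * real (Stirling k (d + 2)) * real (fact (d + 2))
      * (1 / real (fact (d + 2))) ^ k
      * (1 - real (d + 2) / real (fact (d + 2))) ^ (I - k)"

end

theory Submission
  imports Defs "HOL-Combinatorics.Multiset_Permutations"
begin

text \<open>
Put m = d + 2 and split the first m * (A div m) alternatives into the A div m blocks of m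
consecutive alternatives. Relabelling the alternatives inside each block is a bijection between
any two fibres of the map sending a preference to its restrictions to the blocks; hence the block
restrictions of a uniformly random profile are independent and uniform. If, in one block, each of
the m cyclic rotations of the increasing order of the block is the restriction of some
individual's preference, these individuals and the block form a circulant pathology of size m.
The individuals whose restriction is a rotation map onto the m rotations, so the number of
I-tuples of permutations of a block realising every rotation is
sum k. (I choose k) * Stirling k m * m! * (m! - m) ^ (I - k), and divided by (m!) ^ I this is the
sum of the B_k. So no block realises every rotation with probability (1 - sum B_k) ^ (A div m).
\<close>

section \<open>Surjections and covering tuples\<close>

lemma card_surjective_PiE:
  assumes "finite K" "finite R"
  shows "card {f \<in> K \<rightarrow>\<^sub>E R. f ` K = R} = Stirling (card K) (card R) * fact (card R)"
  using assms
proof (induction K arbitrary: R rule: finite_induct)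
  case empty
  then show ?case by (cases "card R") auto
next
  case (insert x K)
  let ?surj = "\<lambda>R. {f \<in> K \<rightarrow>\<^sub>E R. f ` K = R}"
  let ?G = "\<lambda>y. {g \<in> K \<rightarrow>\<^sub>E R. insert y (g ` K) = R}"
  \<comment> \<open>f is onto R iff insert (f x) (f ` K) = R, i.e. f ` K is R or R - {f x}: the Stirling recurrence\<close>
  have card_G: "card (?G y) = card (?surj R) + card (?surj (R - {y}))" if "y \<in> R" for y
  proof -
    have "?G y = ?surj R \<union> ?surj (R - {y})"
      using that by (auto simp: PiE_iff)
    moreover have "?surj R \<inter> ?surj (R - {y}) = {}"
      using that by auto
    ultimately show ?thesis
      using insert.hyps(1) insert.prems by (simp add: card_Un_disjoint finite_PiE)
  qed
  have "{f \<in> insert x K \<rightarrow>\<^sub>E R. f ` insert x K = R}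
      = (\<lambda>(y, g). g(x := y)) ` {(y, g) \<in> R \<times> (K \<rightarrow>\<^sub>E R). (g(x := y)) ` insert x K = R}"
    unfolding PiE_insert_eq by (fastforce simp del: fun_upd_apply image_insert fun_upd_image)
  also have "{(y, g) \<in> R \<times> (K \<rightarrow>\<^sub>E R). (g(x := y)) ` insert x K = R} = (SIGMA y:R. ?G y)"
    using insert.hyps(2) by auto
  finally have image: "{f \<in> insert x K \<rightarrow>\<^sub>E R. f ` insert x K = R}
      = (\<lambda>(y, g). g(x := y)) ` (SIGMA y:R. ?G y)" .
  have "card {f \<in> insert x K \<rightarrow>\<^sub>E R. f ` insert x K = R} = card (SIGMA y:R. ?G y)"
    unfolding image by (rule card_image, rule inj_on_subset[OF inj_combinator[OF insert.hyps(2)]]) auto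
  also have "\<dots> = (\<Sum>y\<in>R. card (?surj R) + card (?surj (R - {y})))"
    using insert.hyps(1) insert.prems by (simp add: card_SigmaI finite_PiE card_G)
  also have "\<dots> = Stirling (card (insert x K)) (card R) * fact (card R)"
    using insert.hyps insert.prems by (cases "card R") (auto simp: insert.IH algebra_simps)
  finally show ?case .
qed

lemma bij_betw_PiE_split:
  assumes "K \<subseteq> J"
  shows "bij_betw (\<lambda>z. (restrict z K, restrict z (J - K)))
           (\<Pi>\<^sub>E i\<in>J. T i) ((\<Pi>\<^sub>E i\<in>K. T i) \<times> (\<Pi>\<^sub>E i\<in>J - K. T i))"
  by (rule bij_betw_byWitness[where f' = "\<lambda>(f, g). \<lambda>i\<in>J. if i \<in> K then f i else g i"])
     (use assms in \<open>auto simp: PiE_iff extensional_def fun_eq_iff\<close>)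

lemma card_PiE_restrict_Collect:
  assumes "K \<subseteq> J"
  shows "card {z \<in> \<Pi>\<^sub>E i\<in>J. T i. P (restrict z K)}
           = card {f \<in> \<Pi>\<^sub>E i\<in>K. T i. P f} * card (\<Pi>\<^sub>E i\<in>J - K. T i)"
proof -
  have "bij_betw (\<lambda>z. (restrict z K, restrict z (J - K))) {z \<in> \<Pi>\<^sub>E i\<in>J. T i. P (restrict z K)}
          ({f \<in> \<Pi>\<^sub>E i\<in>K. T i. P f} \<times> (\<Pi>\<^sub>E i\<in>J - K. T i))"
  proof (rule bij_betw_subset[OF bij_betw_PiE_split[OF assms]])
    have "(\<lambda>z. (restrict z K, restrict z (J - K))) ` {z \<in> \<Pi>\<^sub>E i\<in>J. T i. P (restrict z K)}
        = {p \<in> (\<lambda>z. (restrict z K, restrict z (J - K))) ` (\<Pi>\<^sub>E i\<in>J. T i). P (fst p)}"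
      by auto
    also have "\<dots> = {f \<in> \<Pi>\<^sub>E i\<in>K. T i. P f} \<times> (\<Pi>\<^sub>E i\<in>J - K. T i)"
      unfolding bij_betw_imp_surj_on[OF bij_betw_PiE_split[OF assms]] by auto
    finally show "(\<lambda>z. (restrict z K, restrict z (J - K))) ` {z \<in> \<Pi>\<^sub>E i\<in>J. T i. P (restrict z K)}
        = {f \<in> \<Pi>\<^sub>E i\<in>K. T i. P f} \<times> (\<Pi>\<^sub>E i\<in>J - K. T i)" .
  qed auto
  then show ?thesis
    by (simp add: bij_betw_same_card card_cartesian_product)
qed

lemma card_eq_sum_card_fibers:
  assumes "finite X" "finite Y" "g ` X \<subseteq> Y"
  shows "card X = (\<Sum>y\<in>Y. card {x \<in> X. g x = y})"
  using sum.group[OF assms, of "\<lambda>_. 1 :: nat"] by simp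

lemma card_Collect_ratio_uniform_fibers:
  assumes "finite X" "finite Y" "X \<noteq> {}" "g ` X \<subseteq> Y" "Z \<subseteq> Y"
    and fiber: "\<And>y. y \<in> Y \<Longrightarrow> card {x \<in> X. g x = y} = F"
  shows "real (card {x \<in> X. g x \<in> Z}) / real (card X) = real (card Z) / real (card Y)"
proof -
  have count: "card {x \<in> X. g x \<in> Z'} = card Z' * F" if "Z' \<subseteq> Y" for Z'
  proof -
    have "card {x \<in> X. g x \<in> Z'} = (\<Sum>y\<in>Z'. card {x \<in> {x \<in> X. g x \<in> Z'}. g x = y})"
      using assms(1,2) that by (intro card_eq_sum_card_fibers) (auto intro: finite_subset)
    also have "\<dots> = (\<Sum>y\<in>Z'. F)"
      using that fiber by (intro sum.cong) (auto intro!: arg_cong[where f = card])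
    finally show ?thesis
      by simp
  qed
  have "{x \<in> X. g x \<in> Y} = X"
    using assms(4) by blast
  then have "card X = card Y * F"
    using count[of Y] by simp
  moreover have "card X > 0"
    using assms(1,3) by (simp add: card_gt_0_iff)
  ultimately show ?thesis
    using count[OF assms(5)] by simp
qed

lemma sum_Pow_card:
  assumes "finite J"
  shows "(\<Sum>K\<in>Pow J. \<phi> (card K)) = (\<Sum>k=0..card J. of_nat (card J choose k) * \<phi> k)"
proof -
  have "(\<Sum>K\<in>Pow J. \<phi> (card K)) = (\<Sum>k=0..card J. \<Sum>K\<in>{K\<in>Pow J. card K = k}. \<phi> (card K))"
    using assms by (intro sum.group[symmetric]) (auto intro: card_mono)
  also have "\<dots> = (\<Sum>k=0..card J. of_nat (card J choose k) * \<phi> k)"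
  proof (intro sum.cong refl)
    fix k
    have "{K\<in>Pow J. card K = k} = {K. K \<subseteq> J \<and> card K = k}" by auto
    then show "(\<Sum>K\<in>{K\<in>Pow J. card K = k}. \<phi> (card K)) = of_nat (card J choose k) * \<phi> k"
      using n_subsets[OF assms] by simp
  qed
  finally show ?thesis .
qed

lemma card_PiE_covering:
  assumes "finite J" "finite Q" "R \<subseteq> Q"
  shows "card {z \<in> J \<rightarrow>\<^sub>E Q. R \<subseteq> z ` J}
    = (\<Sum>k=0..card J. (card J choose k) * (Stirling k (card R) * fact (card R)) * (card Q - card R) ^ (card J - k))"
proof -
  let ?S = "{z \<in> J \<rightarrow>\<^sub>E Q. R \<subseteq> z ` J}"
  have fin_R: "finite R"
    using assms finite_subset by blast
  \<comment> \<open>group by the coordinates K with values in R: onto R on K, values in Q - R off K\<close>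
  have fiber: "card {z \<in> ?S. {i \<in> J. z i \<in> R} = K}
      = Stirling (card K) (card R) * fact (card R) * (card Q - card R) ^ (card J - card K)"
    if "K \<subseteq> J" for K
  proof -
    let ?T = "\<lambda>i. if i \<in> K then R else Q - R"
    have "{z \<in> ?S. {i \<in> J. z i \<in> R} = K} = {z \<in> \<Pi>\<^sub>E i\<in>J. ?T i. restrict z K ` K = R}"
      using that assms(3) by (auto simp: PiE_iff)
    then have "card {z \<in> ?S. {i \<in> J. z i \<in> R} = K}
        = card {f \<in> \<Pi>\<^sub>E i\<in>K. ?T i. f ` K = R} * card (\<Pi>\<^sub>E i\<in>J - K. ?T i)"
      using card_PiE_restrict_Collect[OF that, of ?T "\<lambda>f. f ` K = R"] by (simp only:)
    also have "(\<Pi>\<^sub>E i\<in>K. ?T i) = K \<rightarrow>\<^sub>E R"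
      by (intro PiE_cong) simp
    also have "(\<Pi>\<^sub>E i\<in>J - K. ?T i) = J - K \<rightarrow>\<^sub>E Q - R"
      by (intro PiE_cong) simp
    also have "card {f \<in> K \<rightarrow>\<^sub>E R. f ` K = R} = Stirling (card K) (card R) * fact (card R)"
      using that assms(1) fin_R by (intro card_surjective_PiE) (auto intro: finite_subset)
    finally show ?thesis
      using that assms by (simp add: card_funcsetE card_Diff_subset finite_subset)
  qed
  have "card ?S = (\<Sum>K\<in>Pow J. card {z \<in> ?S. {i \<in> J. z i \<in> R} = K})"
    using assms(1,2) by (intro card_eq_sum_card_fibers) (auto simp: finite_PiE)
  also have "\<dots> = (\<Sum>K\<in>Pow J. Stirling (card K) (card R) * fact (card R) * (card Q - card R) ^ (card J - card K))"
    by (intro sum.cong refl fiber) simp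
  also have "\<dots> = (\<Sum>k=0..card J. (card J choose k) * (Stirling k (card R) * fact (card R)) * (card Q - card R) ^ (card J - k))"
    using sum_Pow_card[OF assms(1),
        of "\<lambda>k. Stirling k (card R) * fact (card R) * (card Q - card R) ^ (card J - k)"]
    by (simp add: mult.assoc)
  finally show ?thesis .
qed

section \<open>Restricting permutations to blocks\<close>

definition block_restrictions :: "('a \<Rightarrow> 'b) \<Rightarrow> 'b set \<Rightarrow> 'a list \<Rightarrow> 'b \<Rightarrow> 'a list" where
  "block_restrictions \<beta> B xs = (\<lambda>b\<in>B. filter (\<lambda>x. \<beta> x = b) xs)"

lemma block_restrictions_map:
  assumes "\<And>x. \<beta> (\<pi> x) = \<beta> x"
  shows "block_restrictions \<beta> B (map \<pi> xs) = (\<lambda>b\<in>B. map \<pi> (block_restrictions \<beta> B xs b))"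
  unfolding block_restrictions_def by (intro restrict_ext) (simp add: filter_map o_def assms)

lemma permutes_fiber_preserves:
  assumes "p permutes {x \<in> U. \<beta> x = b}"
  shows "\<beta> (p x) = \<beta> x"
proof (cases "x \<in> U \<and> \<beta> x = b")
  case True
  then show ?thesis
    using permutes_in_image[OF assms, of x] by auto
next
  case False
  then show ?thesis
    using permutes_not_in[OF assms, of x] by auto
qed

lemma permutes_blockwise:
  assumes q: "\<And>b. q b permutes {x \<in> U. \<beta> x = b}"
  shows "(\<lambda>x. q (\<beta> x) x) permutes U"
  unfolding permutes_def
proof (intro conjI allI impI)
  show "q (\<beta> x) x = x" if "x \<notin> U" for x
    using permutes_not_in[OF q] that by simp
  fix y
  let ?x = "inv (q (\<beta> y)) y"
  have "q (\<beta> y) ?x = y"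
    using q by (rule permutes_inverses(1))
  moreover have "\<beta> ?x = \<beta> y"
    using permutes_fiber_preserves[OF q, of "\<beta> y" ?x] \<open>q (\<beta> y) ?x = y\<close> by simp
  moreover have "?x = x" if "q (\<beta> x) x = y" for x
  proof -
    have "\<beta> x = \<beta> y"
      using permutes_fiber_preserves[OF q, of "\<beta> x" x] that by simp
    then show ?thesis
      using that permutes_inv_eq[OF q[of "\<beta> y"], of y x] by simp
  qed
  ultimately show "\<exists>!x. q (\<beta> x) x = y"
    by (metis (no_types))
qed

lemma obtain_blockwise_permutation:
  assumes "\<sigma> \<in> (\<Pi>\<^sub>E b\<in>B. permutations_of_set {x \<in> U. \<beta> x = b})"
    and "\<sigma>' \<in> (\<Pi>\<^sub>E b\<in>B. permutations_of_set {x \<in> U. \<beta> x = b})"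
  obtains \<pi> where "\<pi> permutes U" "\<And>x. \<beta> (\<pi> x) = \<beta> x" "\<And>b. b \<in> B \<Longrightarrow> map \<pi> (\<sigma> b) = \<sigma>' b"
proof -
  \<comment> \<open>q b sends the t-th entry of \<sigma> b to the t-th entry of \<sigma>' b\<close>
  define q where "q b = (if b \<in> B then permutation_of_list (zip (\<sigma> b) (\<sigma>' b)) else id)" for b
  have len: "length (\<sigma>' b) = length (\<sigma> b)" if "b \<in> B" for b
    using PiE_mem[OF assms(1) that] PiE_mem[OF assms(2) that]
    by (simp add: length_finite_permutations_of_set)
  have q: "q b permutes {x \<in> U. \<beta> x = b}" for b
  proof (cases "b \<in> B")
    case True
    then have "list_permutes (zip (\<sigma> b) (\<sigma>' b)) {x \<in> U. \<beta> x = b}"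
      using assms len[OF True] by (intro list_permutesI) (auto simp: permutations_of_set_def)
    then show ?thesis
      using True by (simp add: q_def)
  qed (simp add: q_def permutes_id)
  show ?thesis
  proof
    show "(\<lambda>x. q (\<beta> x) x) permutes U"
      using q by (rule permutes_blockwise)
    show "\<beta> (q (\<beta> x) x) = \<beta> x" for x
      using q by (rule permutes_fiber_preserves)
    show "map (\<lambda>x. q (\<beta> x) x) (\<sigma> b) = \<sigma>' b" if b: "b \<in> B" for b
    proof (rule nth_equalityI)
      fix t assume t: "t < length (map (\<lambda>x. q (\<beta> x) x) (\<sigma> b))"
      have "\<sigma> b ! t \<in> {x \<in> U. \<beta> x = b}"
        using nth_mem[of t "\<sigma> b"] permutations_of_setD(1)[OF PiE_mem[OF assms(1) b]] t by simp
      moreover have "(\<sigma> b ! t, \<sigma>' b ! t) \<in> set (zip (\<sigma> b) (\<sigma>' b))"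
        using t len[OF b] by (auto simp: set_zip)
      ultimately show "map (\<lambda>x. q (\<beta> x) x) (\<sigma> b) ! t = \<sigma>' b ! t"
        using t b assms(1) len[OF b]
        by (auto simp: q_def permutations_of_set_def intro!: permutation_of_list_unique')
    qed (simp add: len b)
  qed
qed

lemma card_block_restrictions_fiber_le:
  assumes "\<sigma> \<in> (\<Pi>\<^sub>E b\<in>B. permutations_of_set {x \<in> U. \<beta> x = b})"
    and "\<sigma>' \<in> (\<Pi>\<^sub>E b\<in>B. permutations_of_set {x \<in> U. \<beta> x = b})"
  shows "card {xs \<in> permutations_of_set U. block_restrictions \<beta> B xs = \<sigma>}
           \<le> card {xs \<in> permutations_of_set U. block_restrictions \<beta> B xs = \<sigma>'}"
proof -
  obtain \<pi> where \<pi>: "\<pi> permutes U" "\<And>x. \<beta> (\<pi> x) = \<beta> x" "\<And>b. b \<in> B \<Longrightarrow> map \<pi> (\<sigma> b) = \<sigma>' b"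
    using obtain_blockwise_permutation[OF assms] by blast
  have "map \<pi> xs \<in> {xs \<in> permutations_of_set U. block_restrictions \<beta> B xs = \<sigma>'}"
    if "xs \<in> {xs \<in> permutations_of_set U. block_restrictions \<beta> B xs = \<sigma>}" for xs
  proof -
    have "map \<pi> xs \<in> permutations_of_set U"
      using that permutations_of_set_image_permutes[OF \<pi>(1)] by blast
    moreover have "block_restrictions \<beta> B (map \<pi> xs) = \<sigma>'"
      using that assms(2) \<pi>(3)
      by (auto simp: block_restrictions_map[where \<beta> = \<beta> and \<pi> = \<pi>, OF \<pi>(2)] PiE_iff extensional_def)
    ultimately show ?thesis
      by simp
  qed
  moreover have "inj_on (map \<pi>) {xs \<in> permutations_of_set U. block_restrictions \<beta> B xs = \<sigma>}"
    using permutes_inj[OF \<pi>(1)] by (simp add: inj_on_def inj_map_eq_map)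
  ultimately show ?thesis
    by (intro card_inj_on_le) auto
qed

lemma card_block_restrictions_fiber_eq:
  assumes "\<sigma> \<in> (\<Pi>\<^sub>E b\<in>B. permutations_of_set {x \<in> U. \<beta> x = b})"
    and "\<sigma>' \<in> (\<Pi>\<^sub>E b\<in>B. permutations_of_set {x \<in> U. \<beta> x = b})"
  shows "card {xs \<in> permutations_of_set U. block_restrictions \<beta> B xs = \<sigma>}
           = card {xs \<in> permutations_of_set U. block_restrictions \<beta> B xs = \<sigma>'}"
  using card_block_restrictions_fiber_le[OF assms] card_block_restrictions_fiber_le[OF assms(2,1)]
  by (rule le_antisym)

lemma block_restrictions_profile_fiber:
  assumes "w \<in> (\<Pi>\<^sub>E b\<in>B. \<Pi>\<^sub>E i\<in>J. Y b)"
  shows "{P \<in> \<Pi>\<^sub>E i\<in>J. X. (\<lambda>b\<in>B. \<lambda>i\<in>J. filter (\<lambda>x. \<beta> x = b) (P i)) = w}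
    = (\<Pi>\<^sub>E i\<in>J. {xs \<in> X. block_restrictions \<beta> B xs = (\<lambda>b\<in>B. w b i)})"
proof (intro set_eqI iffI)
  fix P assume "P \<in> {P \<in> \<Pi>\<^sub>E i\<in>J. X. (\<lambda>b\<in>B. \<lambda>i\<in>J. filter (\<lambda>x. \<beta> x = b) (P i)) = w}"
  then show "P \<in> (\<Pi>\<^sub>E i\<in>J. {xs \<in> X. block_restrictions \<beta> B xs = (\<lambda>b\<in>B. w b i)})"
    by (auto simp: block_restrictions_def PiE_iff intro!: restrict_ext)
next
  fix P assume "P \<in> (\<Pi>\<^sub>E i\<in>J. {xs \<in> X. block_restrictions \<beta> B xs = (\<lambda>b\<in>B. w b i)})"
  then show "P \<in> {P \<in> \<Pi>\<^sub>E i\<in>J. X. (\<lambda>b\<in>B. \<lambda>i\<in>J. filter (\<lambda>x. \<beta> x = b) (P i)) = w}"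
    using assms by (auto simp: block_restrictions_def PiE_iff fun_eq_iff extensional_def) metis+
qed

lemma card_profile_block_restrictions_fiber:
  assumes "finite J"
    and w: "w \<in> (\<Pi>\<^sub>E b\<in>B. \<Pi>\<^sub>E i\<in>J. permutations_of_set {x \<in> U. \<beta> x = b})"
    and \<sigma>\<^sub>0: "\<sigma>\<^sub>0 \<in> (\<Pi>\<^sub>E b\<in>B. permutations_of_set {x \<in> U. \<beta> x = b})"
  shows "card {P \<in> \<Pi>\<^sub>E i\<in>J. permutations_of_set U. (\<lambda>b\<in>B. \<lambda>i\<in>J. filter (\<lambda>x. \<beta> x = b) (P i)) = w}
    = card {xs \<in> permutations_of_set U. block_restrictions \<beta> B xs = \<sigma>\<^sub>0} ^ card J"
proof -
  have "(\<lambda>b\<in>B. w b i) \<in> (\<Pi>\<^sub>E b\<in>B. permutations_of_set {x \<in> U. \<beta> x = b})" if "i \<in> J" for i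
    using w that by (auto simp: PiE_iff)
  then show ?thesis
    unfolding block_restrictions_profile_fiber[OF w] using assms(1)
    by (simp add: card_PiE card_block_restrictions_fiber_eq[OF _ \<sigma>\<^sub>0])
qed

lemma block_restrictions_independent:
  fixes \<beta> :: "'a \<Rightarrow> 'b"
  assumes "finite U" "finite J" "finite B"
    and G: "\<And>b. b \<in> B \<Longrightarrow> G b \<subseteq> (\<Pi>\<^sub>E i\<in>J. permutations_of_set {x \<in> U. \<beta> x = b})"
  shows "real (card {P \<in> \<Pi>\<^sub>E i\<in>J. permutations_of_set U.
                       \<forall>b\<in>B. (\<lambda>i\<in>J. filter (\<lambda>x. \<beta> x = b) (P i)) \<in> G b})
           / real (card (\<Pi>\<^sub>E i\<in>J. permutations_of_set U))
         = (\<Prod>b\<in>B. real (card (G b)) / real (card (\<Pi>\<^sub>E i\<in>J. permutations_of_set {x \<in> U. \<beta> x = b})))"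
proof -
  let ?X = "\<Pi>\<^sub>E i\<in>J. permutations_of_set U"
  let ?Y = "\<Pi>\<^sub>E b\<in>B. permutations_of_set {x \<in> U. \<beta> x = b}"
  let ?W = "\<Pi>\<^sub>E b\<in>B. \<Pi>\<^sub>E i\<in>J. permutations_of_set {x \<in> U. \<beta> x = b}"
  define \<Phi> where "\<Phi> P = (\<lambda>b\<in>B. \<lambda>i\<in>J. filter (\<lambda>x. \<beta> x = b) (P i))" for P :: "'c \<Rightarrow> 'a list"
  have "?Y \<noteq> {}"
    using assms(1) by (simp add: PiE_eq_empty_iff)
  then obtain \<sigma>\<^sub>0 where \<sigma>\<^sub>0: "\<sigma>\<^sub>0 \<in> ?Y"
    by blast
  have "finite (G b)" if "b \<in> B" for b
    using G[OF that] by (rule finite_subset) (simp add: assms(2) finite_PiE)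
  then have "finite ?X" "finite ?W"
    using assms(2,3) by (auto intro!: finite_PiE)
  moreover have "?X \<noteq> {}"
    using assms(1) by (simp add: PiE_eq_empty_iff)
  moreover have "\<Phi> ` ?X \<subseteq> ?W"
    by (auto simp: \<Phi>_def permutations_of_set_def PiE_iff)
  moreover have "PiE B G \<subseteq> ?W"
    using G by (rule PiE_mono)
  ultimately have "real (card {P \<in> ?X. \<Phi> P \<in> PiE B G}) / real (card ?X) = real (card (PiE B G)) / real (card ?W)"
    by (rule card_Collect_ratio_uniform_fibers)
      (unfold \<Phi>_def, rule card_profile_block_restrictions_fiber[OF assms(2) _ \<sigma>\<^sub>0])
  also have "{P \<in> ?X. \<Phi> P \<in> PiE B G} = {P \<in> ?X. \<forall>b\<in>B. (\<lambda>i\<in>J. filter (\<lambda>x. \<beta> x = b) (P i)) \<in> G b}"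
    by (auto simp: \<Phi>_def PiE_iff)
  also have "real (card (PiE B G)) / real (card ?W)
      = (\<Prod>b\<in>B. real (card (G b)) / real (card (\<Pi>\<^sub>E i\<in>J. permutations_of_set {x \<in> U. \<beta> x = b})))"
    unfolding card_PiE[OF assms(3)] of_nat_prod by (rule prod_dividef[symmetric])
  finally show ?thesis .
qed

section \<open>Rotations and circulant pathologies\<close>

lemma prefers_Cons: "prefers xs a b \<Longrightarrow> prefers (x # xs) a b"
  unfolding prefers_def by (metis Suc_less_eq length_Cons nth_Cons_Suc)

lemma prefers_filter_nth:
  "t < t' \<Longrightarrow> t' < length (filter Q xs) \<Longrightarrow> prefers xs (filter Q xs ! t) (filter Q xs ! t')"
proof (induction xs arbitrary: t t')
  case Nil
  then show ?case by simp
next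
  case (Cons x xs)
  show ?case
  proof (cases "Q x")
    case True
    show ?thesis
    proof (cases t)
      case 0
      obtain s' where t': "t' = Suc s'"
        using Cons.prems 0 by (cases t') auto
      then have "filter Q xs ! s' \<in> set xs"
        using Cons.prems True nth_mem[of s' "filter Q xs"] by auto
      then obtain q where "q < length xs" "xs ! q = filter Q xs ! s'"
        by (metis in_set_conv_nth)
      then have "prefers (x # xs) x (filter Q xs ! s')"
        unfolding prefers_def by (intro exI[of _ 0] exI[of _ "Suc q"]) auto
      then show ?thesis
        using True 0 t' by simp
    next
      case (Suc s)
      then obtain s' where t': "t' = Suc s'"
        using Cons.prems by (cases t') auto
      then have "prefers xs (filter Q xs ! s) (filter Q xs ! s')"
        using Cons.IH Cons.prems True Suc by simp
      then show ?thesis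
        using True Suc t' by (simp add: prefers_Cons)
    qed
  next
    case False
    then show ?thesis
      using Cons by (simp add: prefers_Cons)
  qed
qed

lemma inj_on_rotate:
  assumes "distinct ys"
  shows "inj_on (\<lambda>j. rotate j ys) {0..<length ys}"
proof (rule inj_onI)
  fix j j' assume j: "j \<in> {0..<length ys}" and j': "j' \<in> {0..<length ys}"
    and eq: "rotate j ys = rotate j' ys"
  then have "0 < length ys"
    by auto
  then have "ys ! j = ys ! j'"
    using nth_rotate[OF \<open>0 < length ys\<close>, of j] nth_rotate[OF \<open>0 < length ys\<close>, of j'] eq j j' by simp
  then show "j = j'"
    using assms j j' by (simp add: nth_eq_iff_index_eq)
qed

lemma has_circulant_pathology_if_all_rotations:
  assumes "distinct ys" "set ys \<subseteq> {0..<A}"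
    and rotations: "\<forall>j<length ys. \<exists>i<I. filter Q (P i) = rotate j ys"
  shows "has_circulant_pathology A I P (length ys)"
proof -
  let ?k = "length ys"
  have "\<forall>j. \<exists>i. j < ?k \<longrightarrow> i < I \<and> filter Q (P i) = rotate j ys"
    using rotations by blast
  then obtain v where v: "\<And>j. j < ?k \<Longrightarrow> v j < I \<and> filter Q (P (v j)) = rotate j ys"
    by metis
  have rotate_nth: "rotate j ys ! t = ys ! ((j + t) mod ?k)" if "t < ?k" for j t
    using that by (simp add: nth_rotate add.commute)
  show ?thesis
    unfolding has_circulant_pathology_def
  proof (rule exI[of _ "(!) ys"], rule exI[of _ v], intro conjI allI impI)
    show "inj_on ((!) ys) {0..<?k}"
      using assms(1) by (simp add: inj_on_def nth_eq_iff_index_eq)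
    show "(!) ys ` {0..<?k} \<subseteq> {0..<A}"
      using assms(2) by auto
    show "inj_on v {0..<?k}"
    proof (rule inj_onI)
      fix j j' assume j: "j \<in> {0..<?k}" and j': "j' \<in> {0..<?k}" and eq: "v j = v j'"
      have "rotate j ys = rotate j' ys"
        using v[of j] v[of j'] j j' eq by simp
      then show "j = j'"
        using inj_onD[OF inj_on_rotate[OF assms(1)] _ j j'] by simp
    qed
    show "v ` {0..<?k} \<subseteq> {0..<I}"
      using v by auto
    fix j t t' assume "j < ?k" "t < ?k" "t' < ?k" "t < t'"
    then show "prefers (P (v j)) (ys ! ((j + t) mod ?k)) (ys ! ((j + t') mod ?k))"
      using prefers_filter_nth[of t t' Q "P (v j)"] v rotate_nth by simp
  qed
qed

lemma card_PiE_missing_rotation: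
  assumes "finite J" "distinct ys"
  shows "card {z \<in> J \<rightarrow>\<^sub>E permutations_of_set (set ys). \<exists>j<length ys. \<forall>i\<in>J. z i \<noteq> rotate j ys}
      + (\<Sum>k=0..card J. (card J choose k) * (Stirling k (length ys) * fact (length ys))
          * (fact (length ys) - length ys) ^ (card J - k))
    = fact (length ys) ^ card J"
proof -
  let ?W = "J \<rightarrow>\<^sub>E permutations_of_set (set ys)"
  let ?R = "(\<lambda>j. rotate j ys) ` {0..<length ys}"
  have card_R: "card ?R = length ys"
    using card_image[OF inj_on_rotate[OF assms(2)]] by simp
  have R: "?R \<subseteq> permutations_of_set (set ys)"
    using assms(2) by (auto simp: permutations_of_set_def)
  have "{z \<in> ?W. \<exists>j<length ys. \<forall>i\<in>J. z i \<noteq> rotate j ys} = ?W - {z \<in> ?W. ?R \<subseteq> z ` J}"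
    unfolding image_subset_iff image_iff atLeastLessThan_iff by force
  then have "card {z \<in> ?W. \<exists>j<length ys. \<forall>i\<in>J. z i \<noteq> rotate j ys} + card {z \<in> ?W. ?R \<subseteq> z ` J}
      = card ?W"
    using assms(1) by (simp add: card_Diff_subset finite_PiE card_mono)
  then show ?thesis
    unfolding card_PiE_covering[OF assms(1) finite_permutations_of_set R] card_R card_funcsetE[OF assms(1)]
      card_permutations_of_set[OF finite_set] distinct_card[OF assms(2)] .
qed

section \<open>Blocks of consecutive alternatives\<close>

lemma profiles_eq_PiE: "profiles A I = {0..<I} \<rightarrow>\<^sub>E permutations_of_set {0..<A}"
  unfolding profiles_def preferences_def permutations_of_set_def by (simp add: conj_commute)

lemma div_eq_iff_mem_block:
  fixes x m b :: nat
  assumes "0 < m"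
  shows "x div m = b \<longleftrightarrow> x \<in> {b * m..<b * m + m}"
proof
  assume "x div m = b"
  then show "x \<in> {b * m..<b * m + m}"
    using div_times_less_eq_dividend[of x m] div_less_iff_less_mult[OF assms, of x "Suc b"] by auto
next
  assume "x \<in> {b * m..<b * m + m}"
  then show "x div m = b"
    by (intro div_nat_eqI) (auto simp: mult.commute)
qed

lemma block_eq_atLeastLessThan:
  fixes A m b :: nat
  assumes "0 < m" "b < A div m"
  shows "{x \<in> {0..<A}. x div m = b} = {b * m..<b * m + m}"
proof -
  have "Suc b * m \<le> A div m * m"
    using assms(2) by (intro mult_le_mono1) simp
  also have "\<dots> \<le> A"
    by (rule div_times_less_eq_dividend)
  finally show ?thesis
    using div_eq_iff_mem_block[OF assms(1)] by auto
qed

definition block_rotations_occur :: "nat \<Rightarrow> nat \<Rightarrow> (nat \<Rightarrow> nat list) \<Rightarrow> nat \<Rightarrow> bool" where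
  "block_rotations_occur I m P b \<longleftrightarrow>
     (\<forall>j<m. \<exists>i<I. filter (\<lambda>x. x div m = b) (P i) = rotate j [b * m..<b * m + m])"

lemma has_circulant_pathology_if_block_rotations_occur:
  assumes "0 < m" "b < A div m" "block_rotations_occur I m P b"
  shows "has_circulant_pathology A I P m"
proof -
  have "{b * m..<b * m + m} \<subseteq> {0..<A}"
    using block_eq_atLeastLessThan[OF assms(1,2)] by blast
  moreover have "\<forall>j<m. \<exists>i<I. filter (\<lambda>x. x div m = b) (P i) = rotate j [b * m..<b * m + m]"
    using assms(3) unfolding block_rotations_occur_def .
  ultimately have "has_circulant_pathology A I P (length [b * m..<b * m + m])"
    by (intro has_circulant_pathology_if_all_rotations) simp_all
  then show ?thesis
    by simp
qed

lemma prob_block_misses_rotation: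
  assumes "0 < m" "b < A div m"
  shows "real (card {z \<in> {0..<I} \<rightarrow>\<^sub>E permutations_of_set {x \<in> {0..<A}. x div m = b}.
                        \<exists>j<m. \<forall>i<I. z i \<noteq> rotate j [b * m..<b * m + m]})
           / real (card ({0..<I} \<rightarrow>\<^sub>E permutations_of_set {x \<in> {0..<A}. x div m = b}))
         = 1 - real (\<Sum>k=0..I. (I choose k) * (Stirling k m * fact m) * (fact m - m) ^ (I - k))
               / real (fact m) ^ I"
proof -
  let ?ys = "[b * m..<b * m + m]"
  let ?cov = "\<Sum>k=0..I. (I choose k) * (Stirling k m * fact m) * (fact m - m) ^ (I - k)"
  let ?W = "{0..<I} \<rightarrow>\<^sub>E permutations_of_set {x \<in> {0..<A}. x div m = b}"
  let ?G = "{z \<in> ?W. \<exists>j<m. \<forall>i<I. z i \<noteq> rotate j ?ys}"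
  have block: "{x \<in> {0..<A}. x div m = b} = set ?ys"
    using block_eq_atLeastLessThan[OF assms] by simp
  have "?G = {z \<in> {0..<I} \<rightarrow>\<^sub>E permutations_of_set (set ?ys).
               \<exists>j<length ?ys. \<forall>i\<in>{0..<I}. z i \<noteq> rotate j ?ys}"
    unfolding block by auto
  then have "card ?G + ?cov = fact m ^ I"
    using card_PiE_missing_rotation[of "{0..<I}" ?ys] by simp
  then have sum: "real (card ?G) + real ?cov = real (fact m) ^ I"
    by (simp only: flip: of_nat_add of_nat_power)
  have card_W: "real (card ?W) = real (fact m) ^ I"
    unfolding block by (simp add: card_funcsetE)
  have frac: "x / F = 1 - c / F" if "x + c = F" "0 < F" for x c F :: real
    using that by (simp add: field_simps)
  show ?thesis
    unfolding card_W by (rule frac[OF sum]) simp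
qed

lemma prob_no_block_rotations_occur:
  assumes "0 < m"
  shows "real (card {P \<in> profiles A I. \<forall>b < A div m. \<not> block_rotations_occur I m P b})
           / real (card (profiles A I))
         = (1 - real (\<Sum>k=0..I. (I choose k) * (Stirling k m * fact m) * (fact m - m) ^ (I - k))
                / real (fact m) ^ I) ^ (A div m)"
proof -
  let ?J = "{0..<I}"
  let ?block = "\<lambda>b. {x \<in> {0..<A}. x div m = b}"
  let ?cov = "\<Sum>k=0..I. (I choose k) * (Stirling k m * fact m) * (fact m - m) ^ (I - k)"
  define G where "G b = {z \<in> ?J \<rightarrow>\<^sub>E permutations_of_set (?block b).
                          \<exists>j<m. \<forall>i<I. z i \<noteq> rotate j [b * m..<b * m + m]}" for b
  have restrict_filter: "(\<lambda>i\<in>?J. filter (\<lambda>x. x div m = b) (P i)) \<in> ?J \<rightarrow>\<^sub>E permutations_of_set (?block b)"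
    if "P \<in> ?J \<rightarrow>\<^sub>E permutations_of_set {0..<A}" for P b
    using that by (auto simp: permutations_of_set_def PiE_iff)
  have bad_eq: "{P \<in> profiles A I. \<forall>b < A div m. \<not> block_rotations_occur I m P b}
      = {P \<in> ?J \<rightarrow>\<^sub>E permutations_of_set {0..<A}.
                \<forall>b\<in>{0..<A div m}. (\<lambda>i\<in>?J. filter (\<lambda>x. x div m = b) (P i)) \<in> G b}"
    unfolding profiles_eq_PiE G_def block_rotations_occur_def using restrict_filter by auto
  have "real (card {P \<in> ?J \<rightarrow>\<^sub>E permutations_of_set {0..<A}.
                \<forall>b\<in>{0..<A div m}. (\<lambda>i\<in>?J. filter (\<lambda>x. x div m = b) (P i)) \<in> G b})
        / real (card (?J \<rightarrow>\<^sub>E permutations_of_set {0..<A}))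
      = (\<Prod>b\<in>{0..<A div m}. real (card (G b)) / real (card (?J \<rightarrow>\<^sub>E permutations_of_set (?block b))))"
    by (rule block_restrictions_independent[where \<beta> = "\<lambda>x. x div m"]) (auto simp: G_def)
  also have "\<dots> = (\<Prod>b\<in>{0..<A div m}. 1 - real ?cov / real (fact m) ^ I)"
    by (rule prod.cong[OF refl], unfold G_def, rule prob_block_misses_rotation[OF assms]) simp
  finally show ?thesis
    unfolding bad_eq unfolding profiles_eq_PiE by (simp only: prod_constant card_atLeastLessThan diff_zero)
qed

lemma B_term_eq:
  assumes "k \<le> I"
  shows "B_term I d k = real ((I choose k) * (Stirling k (d + 2) * fact (d + 2)) * (fact (d + 2) - (d + 2)) ^ (I - k))
           / real (fact (d + 2)) ^ I"
proof -
  define m where "m = d + 2"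
  define f :: nat where "f = fact m"
  have "f > 0" "m \<le> f"
    unfolding f_def by (simp_all add: fact_ge_self)
  moreover have "real f ^ I = real f ^ k * real f ^ (I - k)"
    using assms by (simp add: power_add[symmetric])
  ultimately show ?thesis
    unfolding B_term_def m_def[symmetric] f_def[symmetric]
    by (simp add: of_nat_diff power_divide field_simps)
qed

lemma sum_B_term:
  "(\<Sum>k = d + 2..I. B_term I d k)
     = real (\<Sum>k=0..I. (I choose k) * (Stirling k (d + 2) * fact (d + 2)) * (fact (d + 2) - (d + 2)) ^ (I - k))
       / real (fact (d + 2)) ^ I"
proof -
  have "(\<Sum>k = d + 2..I. B_term I d k) = (\<Sum>k = 0..I. B_term I d k)"
    by (intro sum.mono_neutral_left) (auto simp: B_term_def)
  also have "\<dots> = (\<Sum>k = 0..I. real ((I choose k) * (Stirling k (d + 2) * fact (d + 2))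
                      * (fact (d + 2) - (d + 2)) ^ (I - k)) / real (fact (d + 2)) ^ I)"
    by (intro sum.cong refl B_term_eq) simp
  finally show ?thesis
    by (simp only: sum_divide_distrib of_nat_sum)
qed

lemma one_minus_card_ratio_le:
  assumes "finite X" "X \<noteq> {}" "Y \<subseteq> X" "X - Y \<subseteq> Z" "finite Z"
  shows "1 - real (card Y) / real (card X) \<le> real (card Z) / real (card X)"
proof -
  have "card X - card Y \<le> card Z"
    using card_mono[OF assms(5,4)] card_Diff_subset[OF finite_subset[OF assms(3,1)] assms(3)] by simp
  moreover have "card Y \<le> card X"
    using card_mono[OF assms(1,3)] .
  moreover have "card X > 0"
    using assms(1,2) by (simp add: card_gt_0_iff)
  ultimately show ?thesis
    by (simp add: field_simps flip: of_nat_diff)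
qed

theorem theorem3:
  fixes A I d :: nat
  assumes "0 < A" and "0 < I" and "0 < d" and "d < min I (A - 1)"
  shows "real (card {P \<in> profiles A I. \<exists>k\<ge>d + 2. has_circulant_pathology A I P k})
           / real (card (profiles A I))
         \<ge> 1 - (1 - (\<Sum>k = d + 2..I. B_term I d k)) ^ (A div (d + 2))"
proof -
  define m where "m = d + 2"
  let ?no_block = "{P \<in> profiles A I. \<forall>b < A div m. \<not> block_rotations_occur I m P b}"
  let ?pathological = "{P \<in> profiles A I. \<exists>k\<ge>d + 2. has_circulant_pathology A I P k}"
  have "profiles A I - ?no_block \<subseteq> ?pathological"
  proof
    fix P assume P: "P \<in> profiles A I - ?no_block"
    then obtain b where "b < A div m" "block_rotations_occur I m P b"
      by blast
    then have "has_circulant_pathology A I P m"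
      by (intro has_circulant_pathology_if_block_rotations_occur) (simp_all add: m_def)
    then show "P \<in> ?pathological"
      using P by (auto simp: m_def)
  qed
  moreover have "finite (profiles A I)" "profiles A I \<noteq> {}"
    by (simp_all add: profiles_eq_PiE PiE_eq_empty_iff finite_PiE)
  ultimately have "1 - real (card ?no_block) / real (card (profiles A I))
      \<le> real (card ?pathological) / real (card (profiles A I))"
    by (intro one_minus_card_ratio_le) auto
  moreover have "real (card ?no_block) / real (card (profiles A I))
      = (1 - real (\<Sum>k=0..I. (I choose k) * (Stirling k m * fact m) * (fact m - m) ^ (I - k))
                / real (fact m) ^ I) ^ (A div m)"
    by (rule prob_no_block_rotations_occur) (simp add: m_def)
  ultimately show ?thesis
    unfolding sum_B_term m_def by simp
qed

end
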